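(* There are constants $C\in(0,\infty)$, $c\in(0,1)$ and, for every $\epsilon>0$, an $N_\epsilon\in\mathbb N$ such that for all $N\ge N_\epsilon$, all $s\in(0,\infty)\cap\frac1{\log N}\mathbb N$ and all $t\in(0,1]\cap\frac1N\mathbb N$, $$\P\big(\tau^{(N)}_{s\log N}=tN\big)\le C\,\frac1N\,\frac st\,t^{(1-\epsilon)s}e^{-cs\log^+(cs)}.$$ Consequently there is $C'\in(0,\infty)$ such that for all $N$ large enough and such $s,t$: $\P(\tau^{(N)}_{s\log N}=tN)\le C'\frac1Nf_{cs}(t)$.
   Context: Positive reals $r(n)=\frac an(1+o(1))$, $a\in(0,\infty)$, $R_N=\sum_{n\le N}r(n)$; $(T^{(N)}_i)$ i.i.d. with $\P(T^{(N)}_i=n)=\frac{r(n)}{R_N}\mathbf1_{\{1,\dots,N\}}(n)$; $\tau^{(N)}_k=\sum_{i\le k}T^{(N)}_i$. $\log^+x=\max(\log x,0)$. $f_s$ is the density of $Y_s$, $Y$ the Dickman subordinator (Lévy measure $\frac1t\mathbf1_{(0,1)}(t)\mathrm dt$); on $(0,1]$, $f_s(t)=\frac{s\,t^{s-1}e^{-\gamma s}}{\Gamma(s+1)}$. *)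

theory Defs
  imports "HOL-Analysis.Analysis"
begin

definition RN :: "(nat \<Rightarrow> real) \<Rightarrow> nat \<Rightarrow> real" where
  "RN r N = (\<Sum>n = 1..N. r n)"

definition stepP :: "(nat \<Rightarrow> real) \<Rightarrow> nat \<Rightarrow> nat \<Rightarrow> real" where
  "stepP r N n = (if 1 \<le> n \<and> n \<le> N then r n / RN r N else 0)"

text \<open>tauP r N k m = P(tau^(N)_k = m), where tau_k is the sum of k i.i.d. copies
  of T^(N); i.e. the k-fold convolution of the step law (tau_0 = 0).\<close>
fun tauP :: "(nat \<Rightarrow> real) \<Rightarrow> nat \<Rightarrow> nat \<Rightarrow> nat \<Rightarrow> real" where
  "tauP r N 0 m = (if m = 0 then 1 else 0)"
| "tauP r N (Suc k) m = (\<Sum>n = 1..m. stepP r N n * tauP r N k (m - n))"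

definition logplus :: "real \<Rightarrow> real" where
  "logplus x = max (ln x) 0"

text \<open>Density of the Dickman subordinator Y_s on (0,1]: f_s(t) = s t^(s-1) e^(-gamma s)/Gamma(s+1).
  Only used for t in (0,1].\<close>
definition dickman_density :: "real \<Rightarrow> real \<Rightarrow> real" where
  "dickman_density s t = s * t powr (s - 1) * exp (- euler_mascheroni * s) / Gamma (s + 1)"

end

theory Submission
  imports Defs "HOL-Computational_Algebra.Polynomial"
begin

(* Write p(n) = P(T = n) and phi(x) = sum_n p(n) x^n, so that P(tau_k = m) is the m-th coefficient
   of phi^k. Differentiating phi^(j+1) gives the size-bias identity
     m P(tau_(j+1) = m) = (j+1) sum_(i<m) P(tau_j = i) (m-i) p(m-i),
   and since n p(n) <= A / log N this yields P(tau_k = m) <= A k / (m log N) * P(tau_(k-1) < m).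
   The last probability is at most 1 and, when t <= s, a Chernoff bound at x = exp(-s/m) bounds it by
   exp(1 + 4s - (1-delta) s log(s/t)); the Chernoff exponent is estimated from below with
   p(n) >= (1-delta)/(n log N) for n >= log N, a consequence of R_N ~ a log N. Both estimates of the
   theorem, with c = 1/8, then follow from elementary inequalities, and Gamma(y) <= y^y handles the
   Dickman density. *)

section \<open>Generating polynomial of the step law\<close>

definition step_poly :: "(nat \<Rightarrow> real) \<Rightarrow> nat \<Rightarrow> real poly" where
  "step_poly r N = (\<Sum>n\<le>N. monom (stepP r N n) n)"

lemma stepP_0 [simp]: "stepP r N 0 = 0"
  by (simp add: stepP_def)

lemma coeff_step_poly: "coeff (step_poly r N) n = stepP r N n"
  by (cases "n \<le> N") (auto simp: step_poly_def coeff_sum stepP_def)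

lemma poly_step_poly: "poly (step_poly r N) x = (\<Sum>n\<le>N. stepP r N n * x ^ n)"
  by (simp add: step_poly_def poly_sum poly_monom)

lemma tauP_eq_coeff_power: "tauP r N k m = coeff (step_poly r N ^ k) m"
proof (induction k arbitrary: m)
  case (Suc k)
  have "coeff (step_poly r N ^ Suc k) m = (\<Sum>n\<le>m. stepP r N n * tauP r N k (m - n))"
    by (simp add: coeff_mult coeff_step_poly Suc)
  also have "\<dots> = (\<Sum>n=1..m. stepP r N n * tauP r N k (m - n))"
    by (rule sum.mono_neutral_right) (auto simp: Suc_le_eq)
  finally show ?case by simp
qed simp

lemma tauP_eq_0_if_less: "m < k \<Longrightarrow> tauP r N k m = 0"
  by (induction k arbitrary: m) (auto intro!: sum.neutral)

(* Coefficient m - 1 of pderiv (step_poly r N ^ Suc j), computed in two ways. *)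
lemma tauP_size_bias:
  assumes "1 \<le> m"
  shows "real m * tauP r N (Suc j) m =
         real (Suc j) * (\<Sum>i<m. tauP r N j i * (real (m - i) * stepP r N (m - i)))"
proof -
  obtain m' where m: "m = Suc m'" using assms by (cases m) auto
  have "real m * tauP r N (Suc j) m = coeff (pderiv (step_poly r N ^ Suc j)) m'"
    by (simp add: coeff_pderiv tauP_eq_coeff_power m)
  also have "\<dots> = real (Suc j) *
      (\<Sum>i\<le>m'. tauP r N j i * (real (Suc (m' - i)) * stepP r N (Suc (m' - i))))"
    unfolding pderiv_power_Suc mult_smult_left coeff_smult coeff_mult
    by (simp add: coeff_pderiv coeff_step_poly tauP_eq_coeff_power)
  also have "(\<Sum>i\<le>m'. tauP r N j i * (real (Suc (m' - i)) * stepP r N (Suc (m' - i))))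
      = (\<Sum>i<m. tauP r N j i * (real (m - i) * stepP r N (m - i)))"
    unfolding m lessThan_Suc_atMost[symmetric] by (intro sum.cong) (auto simp: Suc_diff_le)
  finally show ?thesis .
qed

lemma sum_coeff_less_le_poly_div_power:
  fixes Q :: "real poly"
  assumes "\<And>i. 0 \<le> coeff Q i" "0 < x" "x \<le> 1"
  shows "(\<Sum>i<m. coeff Q i) \<le> poly Q x / x ^ m"
proof -
  have "(\<Sum>i<m. coeff Q i) \<le> (\<Sum>i<m. coeff Q i * x ^ i / x ^ m)"
  proof (rule sum_mono)
    fix i assume "i \<in> {..<m}"
    then have "1 \<le> x ^ i / x ^ m"
      using assms by (simp add: power_decreasing)
    then show "coeff Q i \<le> coeff Q i * x ^ i / x ^ m"
      using mult_left_mono[OF _ assms(1)] by (fastforce simp: mult.commute)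
  qed
  also have "\<dots> \<le> (\<Sum>i\<le>degree Q + m. coeff Q i * x ^ i / x ^ m)"
    using assms by (intro sum_mono2) auto
  also have "\<dots> = (\<Sum>i\<le>degree Q. coeff Q i * x ^ i / x ^ m)"
    by (intro sum.mono_neutral_right) (auto simp: coeff_eq_0)
  also have "\<dots> = poly Q x / x ^ m"
    by (simp add: poly_altdef sum_divide_distrib)
  finally show ?thesis .
qed

section \<open>Harmonic sums and the Chernoff exponent\<close>

lemma ln_diff_le_sum_inverse:
  assumes "1 \<le> h"
  shows "ln (real N + 1) - ln (real h) \<le> (\<Sum>n=h..N. 1 / real n)"
proof (induction N)
  case 0
  then show ?case using assms by simp
next
  case (Suc N)
  show ?case
  proof (cases "h \<le> Suc N")
    case True
    have "ln (real (Suc N) + 1) - ln (real N + 1) \<le> 1 / real (Suc N)"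
      using ln_diff_le_inverse[of "real N + 1"] by (simp add: add_ac)
    then show ?thesis
      using Suc.IH True by (simp add: atLeastAtMostSuc_conv)
  qed simp
qed

lemma sum_inverse_square_le:
  assumes "1 \<le> h"
  shows "real h * (\<Sum>n=h..N. 1 / real n ^ 2) \<le> 2"
proof -
  have "(\<Sum>n=h..N. 1 / real n ^ 2) \<le> (\<Sum>n=h..N. 2 / real n - 2 / real (Suc n))"
  proof (rule sum_mono)
    have telescoping: "1 / x ^ 2 \<le> 2 / x - 2 / (x + 1)" if "1 \<le> x" for x :: real
      using that by (simp add: divide_simps power2_eq_square)
    fix n assume "n \<in> {h..N}"
    then have "1 \<le> real n"
      using assms by auto
    from telescoping[OF this] show "1 / real n ^ 2 \<le> 2 / real n - 2 / real (Suc n)"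
      by (simp add: add.commute)
  qed
  also have "\<dots> \<le> 2 / real h"
  proof (cases "h \<le> Suc N")
    case True
    then show ?thesis
      using sum_Suc_diff[OF True, of "\<lambda>n. - 2 / real n"] by simp
  qed simp
  finally show ?thesis
    using assms by (simp add: field_simps)
qed

lemma exp_minus_le_inverse:
  assumes "0 < (z::real)"
  shows "exp (- z) \<le> 1 / z"
proof -
  have "z \<le> exp z"
    using exp_ge_add_one_self[of z] by linarith
  then show ?thesis
    using assms by (simp add: exp_minus field_simps)
qed

lemma ln_le_sum_inverse_minus_square:
  assumes "1 \<le> h" "1 \<le> N" "0 < y" "real h \<le> 2 / y"
  shows "ln (real N * y) - 3 \<le> (\<Sum>n=h..N. 1 / real n) - real h * (\<Sum>n=h..N. 1 / real n ^ 2)"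
proof -
  have "ln (real h) \<le> ln 2 - ln y"
    using assms by (simp add: ln_div flip: ln_le_cancel_iff)
  moreover have "ln (real N) \<le> ln (real N + 1)"
    using \<open>1 \<le> N\<close> by simp
  moreover have "ln (real N * y) = ln (real N) + ln y"
    using \<open>1 \<le> N\<close> \<open>0 < y\<close> by (simp add: ln_mult)
  ultimately show ?thesis
    using ln_diff_le_sum_inverse[OF \<open>1 \<le> h\<close>, of N] sum_inverse_square_le[OF \<open>1 \<le> h\<close>, of N]
      ln_2_less_1 by linarith
qed

(* Only the terms n >= h = ceil(1/y) are kept: for them exp(-ny) <= 1/(ny) <= h/n. *)
lemma sum_mult_one_minus_exp_lower:
  fixes p :: "nat \<Rightarrow> real"
  assumes p_nonneg: "\<And>n. 0 \<le> p n" and "0 < y" "1 \<le> L" "L \<le> 1 / y" "\<delta> \<le> 1" "1 \<le> N"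
    and p_lower: "\<And>n. L \<le> real n \<Longrightarrow> n \<le> N \<Longrightarrow> (1 - \<delta>) / (real n * L) \<le> p n"
  shows "(1 - \<delta>) / L * (ln (real N * y) - 3) \<le> (\<Sum>n\<le>N. p n * (1 - exp (- (real n * y))))"
proof -
  define h where "h = nat \<lceil>1 / y\<rceil>"
  have h_ge: "1 / y \<le> real h"
    unfolding h_def by (rule real_nat_ceiling_ge)
  have "real h \<le> 1 / y + 1"
    unfolding h_def using \<open>0 < y\<close> of_int_ceiling_le_add_one[of "1 / y"] by simp
  then have "real h \<le> 2 / y" "1 \<le> h"
    using h_ge \<open>1 \<le> L\<close> \<open>L \<le> 1 / y\<close> by auto
  have term_lower: "(1 - \<delta>) / L * (1 / real n - real h * (1 / real n ^ 2))
      \<le> p n * (1 - exp (- (real n * y)))" if n: "n \<in> {h..N}" for n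
  proof -
    have "0 < real n" "real h \<le> real n"
      using n \<open>1 \<le> h\<close> by auto
    have "exp (- (real n * y)) \<le> 1 / (real n * y)"
      using \<open>0 < real n\<close> \<open>0 < y\<close> by (simp add: exp_minus_le_inverse)
    also have "\<dots> \<le> real h / real n"
      using h_ge \<open>0 < real n\<close> \<open>0 < y\<close> by (simp add: field_simps)
    finally have "exp (- (real n * y)) \<le> real h / real n" .
    moreover have "(1 - \<delta>) / (real n * L) \<le> p n"
      using p_lower h_ge n \<open>L \<le> 1 / y\<close> by auto
    ultimately have "(1 - \<delta>) / (real n * L) * (1 - real h / real n)
        \<le> p n * (1 - exp (- (real n * y)))"
      using p_nonneg \<open>real h \<le> real n\<close> \<open>0 < real n\<close> by (intro mult_mono) auto
    then show ?thesis
      using \<open>0 < real n\<close> by (simp add: field_simps power2_eq_square)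
  qed
  have "(1 - \<delta>) / L * (ln (real N * y) - 3)
      \<le> (1 - \<delta>) / L * ((\<Sum>n=h..N. 1 / real n) - real h * (\<Sum>n=h..N. 1 / real n ^ 2))"
    using ln_le_sum_inverse_minus_square[OF \<open>1 \<le> h\<close> \<open>1 \<le> N\<close> \<open>0 < y\<close> \<open>real h \<le> 2 / y\<close>]
      \<open>1 \<le> L\<close> \<open>\<delta> \<le> 1\<close> by (intro mult_left_mono) auto
  also have "\<dots> = (\<Sum>n=h..N. (1 - \<delta>) / L * (1 / real n - real h * (1 / real n ^ 2)))"
    by (simp add: sum_subtractf sum_distrib_left right_diff_distrib)
  also have "\<dots> \<le> (\<Sum>n=h..N. p n * (1 - exp (- (real n * y))))"
    by (rule sum_mono[OF term_lower])
  also have "\<dots> \<le> (\<Sum>n\<le>N. p n * (1 - exp (- (real n * y))))"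
    using \<open>0 < y\<close> p_nonneg by (intro sum_mono2) auto
  finally show ?thesis .
qed

lemma chernoff_exponent_le:
  fixes \<delta> L s u :: real
  assumes "0 \<le> \<delta>" "\<delta> \<le> 1" "0 < L" "0 < s" "0 \<le> u" "u \<le> L"
  shows "s - (s * L - 1) * ((1 - \<delta>) / L * (u - 3)) \<le> 1 + 4 * s - (1 - \<delta>) * s * u"
proof -
  have "(s * L - 1) * ((1 - \<delta>) / L * (u - 3))
      = (1 - \<delta>) * s * u - 3 * ((1 - \<delta>) * s) - (1 - \<delta>) * (u / L) + 3 * ((1 - \<delta>) / L)"
    using \<open>0 < L\<close> by (simp add: field_simps)
  moreover have "(1 - \<delta>) * (u / L) \<le> 1"
    using assms by (intro mult_le_one) auto
  moreover have "(1 - \<delta>) * s \<le> s" "0 \<le> (1 - \<delta>) / L"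
    using assms by auto
  ultimately show ?thesis
    by linarith
qed

section \<open>Size-bias and Chernoff bounds\<close>

(* Bound on P(tau_(k-1) < m), where s = k / log N and t = m / N: the Chernoff bound when t <= s,
   the trivial bound otherwise. *)
definition chernoff_factor :: "real \<Rightarrow> real \<Rightarrow> real \<Rightarrow> real" where
  "chernoff_factor \<delta> s t = (if t \<le> s then exp (1 + 4 * s - (1 - \<delta>) * s * ln (s / t)) else 1)"

lemma chernoff_factor_nonneg: "0 \<le> chernoff_factor \<delta> s t"
  by (simp add: chernoff_factor_def)

context
  fixes r :: "nat \<Rightarrow> real"
  assumes r_pos: "\<And>n. 1 \<le> n \<Longrightarrow> 0 < r n"
begin

lemma RN_pos: "1 \<le> N \<Longrightarrow> 0 < RN r N"
  unfolding RN_def using r_pos by (intro sum_pos) auto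

lemma stepP_nonneg: "0 \<le> stepP r N n"
  using RN_pos[of N] r_pos[of n] by (auto simp: stepP_def)

lemma tauP_nonneg: "0 \<le> tauP r N k m"
  by (induction k arbitrary: m) (auto intro!: sum_nonneg mult_nonneg_nonneg stepP_nonneg)

lemma sum_stepP_eq_1:
  assumes "1 \<le> N"
  shows "(\<Sum>n\<le>N. stepP r N n) = 1"
proof -
  have "(\<Sum>n\<le>N. stepP r N n) = (\<Sum>n=1..N. r n / RN r N)"
    by (rule sum.mono_neutral_cong_right) (auto simp: stepP_def Suc_le_eq)
  also have "\<dots> = 1"
    using RN_pos[OF assms] by (simp add: RN_def flip: sum_divide_distrib)
  finally show ?thesis .
qed

lemma size_biased_stepP_le:
  assumes "1 \<le> N" and B: "\<And>n. \<bar>r n * real n\<bar> \<le> B"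
  shows "real n * stepP r N n \<le> B / RN r N"
proof (cases "1 \<le> n \<and> n \<le> N")
  case True
  then have "real n * stepP r N n = r n * real n / RN r N"
    by (simp add: stepP_def)
  also have "\<dots> \<le> B / RN r N"
    using B[of n] RN_pos[OF \<open>1 \<le> N\<close>] by (intro divide_right_mono) auto
  finally show ?thesis .
next
  case False
  then show ?thesis
    using B[of 0] RN_pos[OF \<open>1 \<le> N\<close>] by (auto simp: stepP_def)
qed

(* Chernoff bound at x = exp(-y), combined with 1 - S <= exp(-S). *)
lemma sum_tauP_less_le_exp:
  assumes "1 \<le> N" "0 \<le> y"
  shows "(\<Sum>i<m. tauP r N j i)
    \<le> exp (real m * y - real j * (\<Sum>n\<le>N. stepP r N n * (1 - exp (- (real n * y)))))"
proof -
  define x where "x = exp (- y)"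
  define S where "S = (\<Sum>n\<le>N. stepP r N n * (1 - exp (- (real n * y))))"
  have x_pow: "x ^ n = exp (- (real n * y))" for n
    unfolding x_def by (simp add: exp_of_nat_mult[symmetric])
  have "0 < x" "x \<le> 1"
    using assms by (auto simp: x_def)
  have poly_x: "poly (step_poly r N) x = 1 - S"
    using sum_stepP_eq_1[OF assms(1)]
    by (simp add: S_def poly_step_poly x_pow algebra_simps sum_subtractf)
  have "0 \<le> 1 - S"
    using \<open>0 < x\<close> by (auto simp flip: poly_x simp: poly_step_poly
        intro!: sum_nonneg mult_nonneg_nonneg stepP_nonneg)
  have "(\<Sum>i<m. tauP r N j i) \<le> poly (step_poly r N ^ j) x / x ^ m"
    unfolding tauP_eq_coeff_power using \<open>0 < x\<close> \<open>x \<le> 1\<close>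
    by (intro sum_coeff_less_le_poly_div_power) (auto simp flip: tauP_eq_coeff_power intro: tauP_nonneg)
  also have "\<dots> = (1 - S) ^ j / x ^ m"
    by (simp add: poly_power poly_x)
  also have "\<dots> \<le> exp (- S) ^ j / x ^ m"
    using \<open>0 \<le> 1 - S\<close> exp_ge_add_one_self[of "- S"] \<open>0 < x\<close>
    by (intro divide_right_mono power_mono) auto
  also have "\<dots> = exp (real m * y - real j * S)"
    by (simp add: x_pow exp_diff exp_minus field_simps flip: exp_of_nat_mult)
  finally show ?thesis
    unfolding S_def .
qed

lemma sum_tauP_less_le_1: "1 \<le> N \<Longrightarrow> (\<Sum>i<m. tauP r N j i) \<le> 1"
  using sum_tauP_less_le_exp[of N 0] by simp

lemma tauP_le_size_bias:
  assumes size: "\<And>n. real n * stepP r N n \<le> B" and "1 \<le> m"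
  shows "tauP r N (Suc j) m \<le> B * real (Suc j) / real m * (\<Sum>i<m. tauP r N j i)"
proof -
  have "real m * tauP r N (Suc j) m \<le> real (Suc j) * (\<Sum>i<m. tauP r N j i * B)"
    unfolding tauP_size_bias[OF \<open>1 \<le> m\<close>]
    by (intro mult_left_mono sum_mono size tauP_nonneg) auto
  then show ?thesis
    using \<open>1 \<le> m\<close> by (simp add: field_simps sum_distrib_left sum_distrib_right)
qed

lemma tauP_le_size_bound:
  assumes "1 \<le> N" and size: "\<And>n. real n * stepP r N n \<le> B" and "1 \<le> k" "1 \<le> m"
  shows "tauP r N k m \<le> B * real k / real m"
proof -
  obtain j where k: "k = Suc j"
    using \<open>1 \<le> k\<close> by (cases k) auto
  have "0 \<le> B"
    using size[of 0] by simp
  have "tauP r N k m \<le> B * real k / real m * (\<Sum>i<m. tauP r N j i)"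
    unfolding k by (rule tauP_le_size_bias[OF size \<open>1 \<le> m\<close>])
  also have "\<dots> \<le> B * real k / real m"
    using \<open>0 \<le> B\<close> by (intro mult_left_le sum_tauP_less_le_1 \<open>1 \<le> N\<close>) simp
  finally show ?thesis .
qed

lemma tauP_le_size_bias_exp:
  assumes "1 \<le> N" and size: "\<And>n. real n * stepP r N n \<le> B" and "0 \<le> y" "1 \<le> m"
    and exponent: "real m * y - real j * (\<Sum>n\<le>N. stepP r N n * (1 - exp (- (real n * y)))) \<le> E"
  shows "tauP r N (Suc j) m \<le> B * real (Suc j) / real m * exp E"
proof -
  have "0 \<le> B"
    using size[of 0] by simp
  have "(\<Sum>i<m. tauP r N j i) \<le> exp E"
    using sum_tauP_less_le_exp[OF \<open>1 \<le> N\<close> \<open>0 \<le> y\<close>, where m = m and j = j] exponent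
    by (meson exp_le_cancel_iff order_trans)
  then have "B * real (Suc j) / real m * (\<Sum>i<m. tauP r N j i) \<le> B * real (Suc j) / real m * exp E"
    using \<open>0 \<le> B\<close> by (intro mult_left_mono) auto
  with tauP_le_size_bias[OF size \<open>1 \<le> m\<close>] show ?thesis
    by (rule order_trans)
qed

lemma tauP_le_chernoff:
  assumes L: "1 \<le> ln (real N)" and size: "\<And>n. real n * stepP r N n \<le> B"
    and "0 \<le> \<delta>" "\<delta> \<le> 1"
    and low: "\<And>n. ln (real N) \<le> real n \<Longrightarrow> n \<le> N \<Longrightarrow> (1 - \<delta>) / (real n * ln (real N)) \<le> stepP r N n"
    and "1 \<le> k" "k \<le> m" "m \<le> N"
    and s: "s = real k / ln (real N)" and t: "t = real m / real N" and "t \<le> s"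
  shows "tauP r N k m \<le> B * real k / real m * exp (1 + 4 * s - (1 - \<delta>) * s * ln (s / t))"
proof -
  define L where "L = ln (real N)"
  define y where "y = s / real m"
  define S where "S = (\<Sum>n\<le>N. stepP r N n * (1 - exp (- (real n * y))))"
  obtain j where k: "k = Suc j"
    using \<open>1 \<le> k\<close> by (cases k) auto
  have "1 \<le> N"
    using L by (cases N) auto
  have "0 < L" "1 \<le> m"
    using L \<open>1 \<le> k\<close> \<open>k \<le> m\<close> by (auto simp: L_def)
  then have "0 < s" "0 < t" "0 < y"
    using \<open>1 \<le> k\<close> \<open>1 \<le> N\<close> by (auto simp: L_def s t y_def)
  have "L \<le> 1 / y"
    using \<open>k \<le> m\<close> \<open>0 < L\<close> \<open>1 \<le> k\<close> by (simp add: y_def s L_def field_simps mult_right_mono)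
  have Ny: "real N * y = s / t"
    using \<open>1 \<le> m\<close> \<open>1 \<le> N\<close> by (simp add: y_def t)
  have "0 \<le> ln (s / t)"
    using \<open>t \<le> s\<close> \<open>0 < t\<close> by simp
  have "1 \<le> 1 / y"
    using \<open>L \<le> 1 / y\<close> L by (simp add: L_def)
  then have "y \<le> 1"
    using \<open>0 < y\<close> by (simp add: field_simps)
  then have "real N * y \<le> real N"
    by (simp add: mult_left_le)
  then have "ln (s / t) \<le> L"
    using \<open>0 < y\<close> \<open>1 \<le> N\<close> by (simp add: L_def flip: Ny)
  have "(1 - \<delta>) / L * (ln (s / t) - 3) \<le> S"
    unfolding S_def Ny[symmetric] using \<open>0 < y\<close> L \<open>L \<le> 1 / y\<close> \<open>\<delta> \<le> 1\<close> \<open>1 \<le> N\<close> low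
    by (intro sum_mult_one_minus_exp_lower) (auto simp: L_def intro: stepP_nonneg)
  then have "real j * ((1 - \<delta>) / L * (ln (s / t) - 3)) \<le> real j * S"
    by (intro mult_left_mono) auto
  moreover have "real j = s * L - 1" "real m * y = s"
    using \<open>0 < L\<close> \<open>1 \<le> m\<close> by (simp_all add: y_def s k L_def)
  ultimately have "real m * y - real j * S \<le> s - (s * L - 1) * ((1 - \<delta>) / L * (ln (s / t) - 3))"
    by simp
  also have "\<dots> \<le> 1 + 4 * s - (1 - \<delta>) * s * ln (s / t)"
    using \<open>0 \<le> \<delta>\<close> \<open>\<delta> \<le> 1\<close> \<open>0 < L\<close> \<open>0 < s\<close> \<open>0 \<le> ln (s / t)\<close> \<open>ln (s / t) \<le> L\<close>
    by (rule chernoff_exponent_le)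
  finally show ?thesis
    unfolding k S_def using \<open>1 \<le> N\<close> size \<open>0 < y\<close> \<open>1 \<le> m\<close> by (intro tauP_le_size_bias_exp) auto
qed

lemma tauP_le_chernoff_factor:
  assumes L: "1 \<le> ln (real N)" and size: "\<And>n. real n * stepP r N n \<le> A / ln (real N)"
    and "0 \<le> \<delta>" "\<delta> \<le> 1"
    and low: "\<And>n. ln (real N) \<le> real n \<Longrightarrow> n \<le> N \<Longrightarrow> (1 - \<delta>) / (real n * ln (real N)) \<le> stepP r N n"
    and "1 \<le> k" "1 \<le> m" "m \<le> N"
    and s: "s = real k / ln (real N)" and t: "t = real m / real N"
  shows "tauP r N k m \<le> A * (1 / real N) * (s / t) * chernoff_factor \<delta> s t"
proof -
  have "1 \<le> N"
    using L by (cases N) auto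
  have "0 \<le> A"
    using size[of 0] L by (simp add: zero_le_divide_iff)
  have scale: "A / ln (real N) * real k / real m = A * (1 / real N) * (s / t)"
    using L \<open>1 \<le> N\<close> \<open>1 \<le> m\<close> by (simp add: s t field_simps)
  consider "m < k" | "k \<le> m" "t \<le> s" | "\<not> t \<le> s"
    by linarith
  then show ?thesis
  proof cases
    case 1
    then show ?thesis
      using \<open>0 \<le> A\<close> L \<open>1 \<le> m\<close>
      by (simp add: tauP_eq_0_if_less chernoff_factor_nonneg s t)
  next
    case 2
    then have "chernoff_factor \<delta> s t = exp (1 + 4 * s - (1 - \<delta>) * s * ln (s / t))"
      by (simp add: chernoff_factor_def)
    with 2 show ?thesis
      using tauP_le_chernoff[OF L size \<open>0 \<le> \<delta>\<close> \<open>\<delta> \<le> 1\<close> low \<open>1 \<le> k\<close> _ \<open>m \<le> N\<close> s t]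
      by (simp only: scale)
  next
    case 3
    then have "chernoff_factor \<delta> s t = 1"
      by (simp add: chernoff_factor_def)
    then show ?thesis
      using tauP_le_size_bound[OF \<open>1 \<le> N\<close> size \<open>1 \<le> k\<close> \<open>1 \<le> m\<close>]
      by (simp only: scale mult_1_right)
  qed
qed

end

section \<open>Asymptotics of the normalisation R_N\<close>

lemma ln_at_top_sequentially: "filterlim (\<lambda>N. ln (real N)) at_top sequentially"
  by (rule filterlim_compose[OF ln_at_top filterlim_real_sequentially])

lemma harm_over_ln_tendsto_1: "((\<lambda>N. harm N / ln (real N)) \<longlongrightarrow> 1) sequentially"
proof -
  have "((\<lambda>N. (harm N - ln (real N)) / ln (real N)) \<longlongrightarrow> 0) sequentially"
    using euler_mascheroni_LIMSEQ
    by (rule tendsto_divide_0[OF _ filterlim_at_top_imp_at_infinity[OF ln_at_top_sequentially]])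
  then have "((\<lambda>N. 1 + (harm N - ln (real N)) / ln (real N)) \<longlongrightarrow> 1) sequentially"
    using tendsto_add[OF tendsto_const] by fastforce
  moreover have "eventually (\<lambda>N. 1 + (harm N - ln (real N)) / ln (real N) = harm N / ln (real N))
      sequentially"
    using eventually_gt_at_top[of 1] by eventually_elim (simp add: field_simps)
  ultimately show ?thesis
    by (rule Lim_transform_eventually)
qed

lemma abs_RN_minus_harm_le:
  assumes r_asymp: "((\<lambda>n. r n * real n) \<longlongrightarrow> a) sequentially" and "0 < \<eta>"
  obtains K where "\<And>N. \<bar>RN r N - a * harm N\<bar> \<le> K + \<eta> * harm N"
proof -
  obtain M where M: "\<And>n. M \<le> n \<Longrightarrow> \<bar>r n * real n - a\<bar> < \<eta>"
    using tendstoD[OF r_asymp \<open>0 < \<eta>\<close>] by (auto simp: eventually_sequentially dist_real_def)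
  define f where "f n = \<bar>r n - a / real n\<bar>" for n
  have "\<bar>RN r N - a * harm N\<bar> \<le> sum f {1..M} + \<eta> * harm N" for N
  proof -
    have "RN r N - a * harm N = (\<Sum>n=1..N. r n - a / real n)"
      by (simp add: RN_def harm_def sum_subtractf sum_distrib_left divide_inverse)
    also have "\<bar>\<dots>\<bar> \<le> sum f {1..N}"
      unfolding f_def by (rule sum_abs)
    also have "\<dots> \<le> sum f ({1..M} \<union> {M<..N})"
      by (intro sum_mono2) (auto simp: f_def)
    also have "\<dots> = sum f {1..M} + sum f {M<..N}"
      by (intro sum.union_disjoint) auto
    also have "sum f {M<..N} \<le> (\<Sum>n\<in>{M<..N}. \<eta> * inverse (real n))"
    proof (rule sum_mono)
      fix n assume "n \<in> {M<..N}"
      then have "0 < real n" "\<bar>r n * real n - a\<bar> < \<eta>"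
        using M by auto
      moreover have "r n - a / real n = (r n * real n - a) / real n"
        using \<open>0 < real n\<close> by (simp add: field_simps)
      then have "f n = \<bar>r n * real n - a\<bar> / real n"
        by (simp add: f_def abs_divide)
      ultimately show "f n \<le> \<eta> * inverse (real n)"
        by (simp add: divide_inverse)
    qed
    also have "\<dots> \<le> \<eta> * harm N"
      unfolding harm_def sum_distrib_left using \<open>0 < \<eta>\<close> by (intro sum_mono2) auto
    finally show ?thesis
      by simp
  qed
  then show thesis
    by (rule that)
qed

lemma abs_ratio_minus_le:
  fixes R H L K a \<eta> :: real
  assumes "0 < L" "\<bar>R - a * H\<bar> \<le> K + \<eta> * H"
  shows "\<bar>R / L - a\<bar> \<le> K / L + \<eta> * (H / L) + \<bar>a\<bar> * \<bar>H / L - 1\<bar>"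
proof -
  have "R / L - a = (R - a * H) / L + a * (H / L - 1)"
    using assms by (simp add: field_simps)
  then have "\<bar>R / L - a\<bar> \<le> \<bar>R - a * H\<bar> / L + \<bar>a\<bar> * \<bar>H / L - 1\<bar>"
    using assms abs_triangle_ineq[of "(R - a * H) / L" "a * (H / L - 1)"]
    by (simp add: abs_mult abs_divide)
  also have "\<bar>R - a * H\<bar> / L \<le> (K + \<eta> * H) / L"
    using assms by (simp add: divide_right_mono)
  finally show ?thesis
    by (simp add: add_divide_distrib)
qed

lemma RN_over_ln_tendsto:
  assumes r_asymp: "((\<lambda>n. r n * real n) \<longlongrightarrow> a) sequentially"
  shows "((\<lambda>N. RN r N / ln (real N)) \<longlongrightarrow> a) sequentially"
proof (rule tendstoI)
  fix \<epsilon> :: real assume "0 < \<epsilon>"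
  define \<eta> where "\<eta> = \<epsilon> / (4 + \<bar>a\<bar>)"
  have "0 < \<eta>" "(3 + \<bar>a\<bar>) * \<eta> < \<epsilon>"
    using \<open>0 < \<epsilon>\<close> by (auto simp: \<eta>_def field_simps)
  obtain K where K: "\<And>N. \<bar>RN r N - a * harm N\<bar> \<le> K + \<eta> * harm N"
    using abs_RN_minus_harm_le[OF r_asymp \<open>0 < \<eta>\<close>] by blast
  have "((\<lambda>N. K / ln (real N)) \<longlongrightarrow> 0) sequentially"
    using filterlim_at_top_imp_at_infinity[OF ln_at_top_sequentially]
    by (rule tendsto_divide_0[OF tendsto_const])
  then have "eventually (\<lambda>N. K / ln (real N) < \<eta>) sequentially"
    using \<open>0 < \<eta>\<close> by (rule order_tendstoD)
  moreover have "eventually (\<lambda>N. \<bar>harm N / ln (real N) - 1\<bar> < \<eta>) sequentially"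
    using tendstoD[OF harm_over_ln_tendsto_1 \<open>0 < \<eta>\<close>] by (simp add: dist_real_def)
  moreover have "eventually (\<lambda>N. harm N / ln (real N) < 2) sequentially"
    using harm_over_ln_tendsto_1 by (rule order_tendstoD) simp
  moreover have "eventually (\<lambda>N. 0 < ln (real N)) sequentially"
    using ln_at_top_sequentially by (simp add: filterlim_at_top_dense)
  ultimately show "eventually (\<lambda>N. dist (RN r N / ln (real N)) a < \<epsilon>) sequentially"
  proof eventually_elim
    case (elim N)
    have "\<eta> * (harm N / ln (real N)) \<le> \<eta> * 2" "\<bar>a\<bar> * \<bar>harm N / ln (real N) - 1\<bar> \<le> \<bar>a\<bar> * \<eta>"
      using elim \<open>0 < \<eta>\<close> by (intro mult_left_mono; simp)+
    then show ?case
      using abs_ratio_minus_le[OF \<open>0 < ln (real N)\<close> K[of N]] elim \<open>(3 + \<bar>a\<bar>) * \<eta> < \<epsilon>\<close>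
      by (simp add: dist_real_def algebra_simps)
  qed
qed

lemma eventually_size_biased_stepP_le:
  assumes a_pos: "0 < a" and r_pos: "\<And>n. 1 \<le> n \<Longrightarrow> 0 < r n"
    and r_asymp: "((\<lambda>n. r n * real n) \<longlongrightarrow> a) sequentially"
  obtains A where "0 < A"
    and "eventually (\<lambda>N. 1 \<le> ln (real N) \<and> (\<forall>n. real n * stepP r N n \<le> A / ln (real N))) sequentially"
proof -
  have "Bseq (\<lambda>n. r n * real n)"
    using r_asymp by (intro convergent_imp_Bseq convergentI)
  then obtain B where "0 < B" and B: "\<And>n. \<bar>r n * real n\<bar> \<le> B"
    by (auto elim: BseqE)
  have "eventually (\<lambda>N. a / 2 < RN r N / ln (real N)) sequentially"
    using RN_over_ln_tendsto[OF r_asymp] by (rule order_tendstoD) (use a_pos in simp)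
  moreover have "eventually (\<lambda>N. 1 \<le> ln (real N)) sequentially"
    using ln_at_top_sequentially by (simp add: filterlim_at_top)
  ultimately have "eventually (\<lambda>N. 1 \<le> ln (real N) \<and>
      (\<forall>n. real n * stepP r N n \<le> (2 * B / a) / ln (real N))) sequentially"
  proof eventually_elim
    case (elim N)
    then have "1 \<le> N"
      by (cases N) auto
    have "a / 2 * ln (real N) \<le> RN r N" "0 < a / 2 * ln (real N)"
      using elim a_pos by (auto simp: field_simps)
    then have "B / RN r N \<le> B / (a / 2 * ln (real N))"
      using \<open>0 < B\<close> by (intro divide_left_mono) auto
    also have "\<dots> = (2 * B / a) / ln (real N)"
      by simp
    finally have "B / RN r N \<le> (2 * B / a) / ln (real N)" .
    then have "real n * stepP r N n \<le> (2 * B / a) / ln (real N)" for n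
      using size_biased_stepP_le[OF r_pos \<open>1 \<le> N\<close> B, of n] by linarith
    with elim show ?case
      by blast
  qed
  moreover have "0 < 2 * B / a"
    using \<open>0 < B\<close> a_pos by simp
  ultimately show thesis
    using that by blast
qed

lemma eventually_stepP_lower:
  assumes a_pos: "0 < a" and r_pos: "\<And>n. 1 \<le> n \<Longrightarrow> 0 < r n"
    and r_asymp: "((\<lambda>n. r n * real n) \<longlongrightarrow> a) sequentially" and "0 < \<delta>"
  shows "eventually (\<lambda>N. \<forall>n. ln (real N) \<le> real n \<longrightarrow> n \<le> N \<longrightarrow>
           (1 - \<delta>) / (real n * ln (real N)) \<le> stepP r N n) sequentially"
proof -
  define a' where "a' = a * (1 - \<delta> / 2)"
  have "a' < a" "(1 - \<delta>) * a < a'"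
    using a_pos \<open>0 < \<delta>\<close> by (auto simp: a'_def algebra_simps)
  obtain M where M: "\<And>n. M \<le> n \<Longrightarrow> a' < r n * real n"
    using order_tendstoD(1)[OF r_asymp \<open>a' < a\<close>] by (auto simp: eventually_sequentially)
  have "eventually (\<lambda>N. (1 - \<delta>) * (RN r N / ln (real N)) < a') sequentially"
    using tendsto_mult_left[OF RN_over_ln_tendsto[OF r_asymp]] \<open>(1 - \<delta>) * a < a'\<close>
    by (rule order_tendstoD)
  moreover have "eventually (\<lambda>N. 1 \<le> ln (real N) \<and> real M \<le> ln (real N)) sequentially"
    using ln_at_top_sequentially by (intro eventually_conj) (simp_all add: filterlim_at_top)
  ultimately show ?thesis
  proof eventually_elim
    case (elim N)
    show ?case
    proof (intro allI impI)
      fix n assume n: "ln (real N) \<le> real n" "n \<le> N"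
      then have "1 \<le> n" "M \<le> n"
        using elim by auto
      have "1 \<le> N"
        using \<open>1 \<le> n\<close> n by simp
      have "(1 - \<delta>) * RN r N < a' * ln (real N)"
        using elim by (simp add: field_simps)
      also have "\<dots> \<le> r n * real n * ln (real N)"
        using M[OF \<open>M \<le> n\<close>] elim by (intro mult_right_mono) auto
      finally have "(1 - \<delta>) * RN r N \<le> r n * (real n * ln (real N))"
        by (simp add: mult.assoc)
      moreover have "0 < RN r N"
        by (rule RN_pos) (use r_pos \<open>1 \<le> N\<close> in auto)
      moreover have "0 < real n * ln (real N)"
        using \<open>1 \<le> n\<close> elim by simp
      ultimately show "(1 - \<delta>) / (real n * ln (real N)) \<le> stepP r N n"
        using \<open>1 \<le> n\<close> n by (simp add: stepP_def divide_simps)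
    qed
  qed
qed

lemma tauP_le_chernoff_majorant:
  assumes a_pos: "0 < a" and r_pos: "\<And>n. 1 \<le> n \<Longrightarrow> 0 < r n"
    and r_asymp: "((\<lambda>n. r n * real n) \<longlongrightarrow> a) sequentially"
  obtains A where "0 < A"
    and "\<And>\<delta> H. 0 < \<delta> \<Longrightarrow> \<delta> \<le> 1 \<Longrightarrow>
      (\<And>s t. 0 < s \<Longrightarrow> 0 < t \<Longrightarrow> t \<le> 1 \<Longrightarrow> s / t * chernoff_factor \<delta> s t \<le> H s t) \<Longrightarrow>
      \<exists>N\<^sub>0. \<forall>N\<ge>N\<^sub>0. \<forall>k m. 1 \<le> k \<longrightarrow> 1 \<le> m \<longrightarrow> m \<le> N \<longrightarrow>
        tauP r N k m \<le> A * (1 / real N) * H (real k / ln (real N)) (real m / real N)"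
proof -
  obtain A where "0 < A" and size: "eventually (\<lambda>N. 1 \<le> ln (real N) \<and>
      (\<forall>n. real n * stepP r N n \<le> A / ln (real N))) sequentially"
    using eventually_size_biased_stepP_le[OF a_pos r_pos r_asymp] by blast
  have "\<exists>N\<^sub>0. \<forall>N\<ge>N\<^sub>0. \<forall>k m. 1 \<le> k \<longrightarrow> 1 \<le> m \<longrightarrow> m \<le> N \<longrightarrow>
      tauP r N k m \<le> A * (1 / real N) * H (real k / ln (real N)) (real m / real N)"
    if "0 < \<delta>" "\<delta> \<le> 1" and H: "\<And>s t. 0 < s \<Longrightarrow> 0 < t \<Longrightarrow> t \<le> 1 \<Longrightarrow> s / t * chernoff_factor \<delta> s t \<le> H s t"
    for \<delta> H
  proof -
    obtain N\<^sub>0 where N\<^sub>0: "\<And>N. N\<^sub>0 \<le> N \<Longrightarrow> 1 \<le> ln (real N) \<and> (\<forall>n. real n * stepP r N n \<le> A / ln (real N)) \<and>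
        (\<forall>n. ln (real N) \<le> real n \<longrightarrow> n \<le> N \<longrightarrow> (1 - \<delta>) / (real n * ln (real N)) \<le> stepP r N n)"
      using eventually_conj[OF size eventually_stepP_lower[OF a_pos r_pos r_asymp \<open>0 < \<delta>\<close>]]
      by (auto simp: eventually_sequentially)
    have "tauP r N k m \<le> A * (1 / real N) * H (real k / ln (real N)) (real m / real N)"
      if "N\<^sub>0 \<le> N" "1 \<le> k" "1 \<le> m" "m \<le> N" for N k m
    proof -
      define s t where "s = real k / ln (real N)" and "t = real m / real N"
      have "0 < ln (real N)"
        using N\<^sub>0[OF \<open>N\<^sub>0 \<le> N\<close>] by linarith
      then have "0 < s" "0 < t" "t \<le> 1"
        using that by (auto simp: s_def t_def)
      have "tauP r N k m \<le> A * (1 / real N) * (s / t) * chernoff_factor \<delta> s t"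
        using N\<^sub>0[OF \<open>N\<^sub>0 \<le> N\<close>] that \<open>0 < \<delta>\<close> \<open>\<delta> \<le> 1\<close>
        by (intro tauP_le_chernoff_factor[OF r_pos]) (auto simp: s_def t_def)
      also have "\<dots> = A * (1 / real N) * (s / t * chernoff_factor \<delta> s t)"
        by (simp only: mult.assoc)
      also have "\<dots> \<le> A * (1 / real N) * H s t"
        using H[OF \<open>0 < s\<close> \<open>0 < t\<close> \<open>t \<le> 1\<close>] \<open>0 < A\<close> by (intro mult_left_mono) auto
      finally show ?thesis
        by (simp add: s_def t_def)
    qed
    then show ?thesis
      by blast
  qed
  with \<open>0 < A\<close> show thesis
    using that by blast
qed

lemma Gamma_le_1:
  assumes "1 \<le> y" "y \<le> (2::real)"
  shows "Gamma y \<le> 1"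
proof -
  have "convex_on {1..2} (ln \<circ> Gamma :: real \<Rightarrow> real)"
    by (rule convex_on_subset[OF log_convex_Gamma_real]) auto
  then have "ln (Gamma y) \<le> max (ln (Gamma 1)) (ln (Gamma (2::real)))"
    using convex_on_le_max[of 1 2 "ln \<circ> Gamma" y] assms by auto
  also have "Gamma (2::real) = 1"
    using Gamma_fact[of 1] by simp
  finally show ?thesis
    using assms by simp
qed

lemma Gamma_le_exp_mult_ln:
  assumes "1 \<le> (y::real)"
  shows "Gamma y \<le> exp (y * ln y)"
proof (cases "y \<le> 2")
  case True
  then have "Gamma y \<le> 1"
    using Gamma_le_1 assms by simp
  also have "1 \<le> exp (y * ln y)"
    using assms by simp
  finally show ?thesis .
next
  case False
  define n where "n = nat \<lceil>y\<rceil>"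
  have "y \<le> real n" "real n < y + 1" "2 \<le> n"
    using False by (auto simp: n_def) linarith+
  have "Gamma y \<le> Gamma (real n)"
    using \<open>y \<le> real n\<close> False
    by (cases "y = real n") (auto intro!: less_imp_le Gamma_real_strict_mono)
  also have "\<dots> = fact (n - 1)"
    using Gamma_fact[of "n - 1"] \<open>2 \<le> n\<close> by (simp add: of_nat_diff)
  also have "\<dots> \<le> real (n - 1) ^ (n - 1)"
    using fact_le_power[of "n - 1"] by simp
  also have "\<dots> \<le> y ^ (n - 1)"
    using \<open>real n < y + 1\<close> \<open>2 \<le> n\<close> by (intro power_mono) (auto simp: of_nat_diff)
  also have "\<dots> = y powr real (n - 1)"
    using False by (simp add: powr_realpow)
  also have "\<dots> \<le> y powr y"
    using False \<open>real n < y + 1\<close> \<open>2 \<le> n\<close> by (intro powr_mono) (auto simp: of_nat_diff)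
  also have "\<dots> = exp (y * ln y)"
    using False by (simp add: powr_def mult.commute)
  finally show ?thesis .
qed

lemma diff_one_le_mult_ln:
  assumes "0 < (s::real)"
  shows "s - 1 \<le> s * ln s"
proof -
  have "ln (1 / s) \<le> 1 / s - 1"
    using assms by (intro ln_le_minus_one) auto
  then have "s * (1 - 1 / s) \<le> s * ln s"
    using assms by (intro mult_left_mono) (auto simp: ln_div)
  then show ?thesis
    using assms by (simp add: algebra_simps)
qed

lemma neg_one_le_mult_ln:
  assumes "0 < (t::real)" "t \<le> 1" "0 \<le> s" "s \<le> t"
  shows "-1 \<le> s * ln t"
proof -
  have "t * ln t \<le> s * ln t"
    using assms by (intro mult_right_mono_neg) auto
  then show ?thesis
    using diff_one_le_mult_ln[OF \<open>0 < t\<close>] assms by linarith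
qed

lemma linear_minus_half_entropy_le:
  assumes "0 < (s::real)"
  shows "4 * s - s * ln s / 2 + s / 8 + (s / 8 + 1) * ln (s / 8 + 1) \<le> 10 * exp 20"
proof (cases "s \<le> exp 20")
  case True
  have "- (s * ln s / 2) \<le> 1"
    using diff_one_le_mult_ln[OF assms] assms by (cases "0 \<le> ln s") (auto simp: zero_le_mult_iff)
  have "s / 8 + 1 \<le> exp 20"
    using True exp_ge_add_one_self[of 20] by linarith
  then have "ln (s / 8 + 1) \<le> 20"
    using assms ln_le_cancel_iff[of "s / 8 + 1" "exp 20"] by simp
  then have "(s / 8 + 1) * ln (s / 8 + 1) \<le> (exp 20 / 8 + 1) * 20"
    using True assms by (intro mult_mono) auto
  also have "\<dots> = 5 / 2 * exp 20 + 20"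
    by simp
  finally show ?thesis
    using True \<open>- (s * ln s / 2) \<le> 1\<close> exp_ge_add_one_self[of 20] by linarith
next
  case False
  then have "20 \<le> ln s" "8 \<le> s"
    using assms exp_ge_add_one_self[of 20] by (auto simp: ln_ge_iff)
  then have "s / 8 + 1 \<le> s / 4"
    by linarith
  then have "(s / 8 + 1) * ln (s / 8 + 1) \<le> s / 4 * ln s"
    using assms by (intro mult_mono) auto
  moreover have "20 * s \<le> s * ln s"
    using \<open>20 \<le> ln s\<close> assms by simp
  ultimately show ?thesis
    using assms exp_gt_zero[of 20] by linarith
qed

lemma half_mult_ln_le:
  fixes s \<delta> :: real
  assumes "0 < s" "0 \<le> \<delta>" "\<delta> \<le> 1 / 2"
  shows "s * ln s / 2 - 1 / 2 \<le> (1 - \<delta>) * (s * ln s)"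
proof (cases "0 \<le> ln s")
  case True
  then have "0 \<le> s * ln s"
    using \<open>0 < s\<close> by (intro mult_nonneg_nonneg) auto
  then have "1 / 2 * (s * ln s) \<le> (1 - \<delta>) * (s * ln s)"
    using \<open>\<delta> \<le> 1 / 2\<close> by (intro mult_right_mono) auto
  then show ?thesis
    by simp
next
  case False
  then have "\<delta> * (s * ln s) \<le> 0"
    using \<open>0 < s\<close> \<open>0 \<le> \<delta>\<close> by (simp add: mult_nonneg_nonpos mult_pos_neg)
  moreover have "(1 - \<delta>) * (s * ln s) = s * ln s - \<delta> * (s * ln s)"
    by (simp add: algebra_simps)
  ultimately show ?thesis
    using diff_one_le_mult_ln[OF \<open>0 < s\<close>] \<open>0 < s\<close> by linarith
qed

lemma mult_logplus_le:
  assumes "0 < s"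
  shows "1 / 8 * s * logplus (1 / 8 * s) \<le> (s / 8 + 1) * ln (s / 8 + 1)"
proof -
  have "logplus (1 / 8 * s) \<le> ln (s / 8 + 1)"
    using assms by (simp add: logplus_def)
  then show ?thesis
    using assms by (intro mult_mono) (auto simp: logplus_def)
qed

lemma chernoff_factor_le_power_bound:
  assumes "0 < s" "0 < t" "t \<le> 1" "0 \<le> \<delta>" "\<delta> \<le> 1 / 2" "\<delta> \<le> \<epsilon>"
  shows "chernoff_factor \<delta> s t
    \<le> exp (2 + 10 * exp 20) * t powr ((1 - \<epsilon>) * s) * exp (- (1 / 8) * s * logplus (1 / 8 * s))"
proof -
  define Q where "Q = s * ln t"
  define Z where "Z = 1 / 8 * s * logplus (1 / 8 * s)"
  have "Q \<le> 0"
    using assms by (simp add: Q_def mult_nonneg_nonpos)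
  have "Q \<le> (1 - \<delta>) * Q"
    using \<open>Q \<le> 0\<close> \<open>0 \<le> \<delta>\<close> by (simp add: algebra_simps mult_nonpos_nonneg)
  have "(1 - \<delta>) * Q \<le> (1 - \<epsilon>) * Q"
    using \<open>Q \<le> 0\<close> \<open>\<delta> \<le> \<epsilon>\<close> by (simp add: mult_right_mono_neg)
  have "t powr ((1 - \<epsilon>) * s) = exp ((1 - \<epsilon>) * Q)"
    using \<open>0 < t\<close> by (simp add: powr_def Q_def mult.assoc)
  then have rhs: "exp (2 + 10 * exp 20) * t powr ((1 - \<epsilon>) * s) * exp (- (1 / 8) * s * logplus (1 / 8 * s))
      = exp (2 + 10 * exp 20 + (1 - \<epsilon>) * Q - Z)"
    by (simp add: Z_def mult_exp_exp)
  show ?thesis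
  proof (cases "t \<le> s")
    case True
    have "(1 - \<delta>) * s * ln (s / t) = (1 - \<delta>) * (s * ln s) - (1 - \<delta>) * Q"
      using \<open>0 < s\<close> \<open>0 < t\<close> by (simp add: Q_def ln_div algebra_simps)
    then have "1 + 4 * s - (1 - \<delta>) * s * ln (s / t) \<le> 2 + 10 * exp 20 + (1 - \<epsilon>) * Q - Z"
      using linear_minus_half_entropy_le[OF \<open>0 < s\<close>] half_mult_ln_le[OF \<open>0 < s\<close> \<open>0 \<le> \<delta>\<close> \<open>\<delta> \<le> 1 / 2\<close>]
        mult_logplus_le[OF \<open>0 < s\<close>] \<open>(1 - \<delta>) * Q \<le> (1 - \<epsilon>) * Q\<close> \<open>0 < s\<close>
      unfolding Z_def by linarith
    with True show ?thesis
      unfolding rhs by (simp add: chernoff_factor_def)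
  next
    case False
    then have "Z = 0"
      using \<open>t \<le> 1\<close> \<open>0 < s\<close> by (simp add: Z_def logplus_def)
    moreover have "-1 \<le> Q"
      using False assms by (simp add: Q_def neg_one_le_mult_ln)
    ultimately have "0 \<le> 2 + 10 * exp 20 + (1 - \<epsilon>) * Q - Z"
      using \<open>Q \<le> (1 - \<delta>) * Q\<close> \<open>(1 - \<delta>) * Q \<le> (1 - \<epsilon>) * Q\<close> exp_gt_zero[of 20] by linarith
    with False show ?thesis
      unfolding rhs by (simp add: chernoff_factor_def)
  qed
qed

lemma dickman_density_eq:
  assumes "0 < t"
  shows "dickman_density c t = c / t * t powr c * exp (- euler_mascheroni * c) / Gamma (c + 1)"
  using assms by (simp add: dickman_density_def powr_diff)

lemma dickman_density_lower:
  assumes "0 < s" "0 < t"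
  shows "s / t * exp (s * ln t / 8 - s / 8 - (s / 8 + 1) * ln (s / 8 + 1))
    \<le> 8 * dickman_density (1 / 8 * s) t"
proof -
  define G where "G = (s / 8 + 1) * ln (s / 8 + 1)"
  define Y where "Y = t powr (1 / 8 * s) * exp (- euler_mascheroni * (1 / 8 * s)) / Gamma (1 / 8 * s + 1)"
  have "0 < Gamma (1 / 8 * s + 1)" "Gamma (1 / 8 * s + 1) \<le> exp G"
    using Gamma_le_exp_mult_ln[of "1 / 8 * s + 1"] \<open>0 < s\<close> by (simp_all add: G_def add.commute)
  have "euler_mascheroni * (1 / 8 * s) \<le> s / 8"
    using euler_mascheroni_less_13_over_22 \<open>0 < s\<close> by (simp add: mult_right_mono)
  then have "exp (s * ln t / 8 - s / 8) \<le> t powr (1 / 8 * s) * exp (- euler_mascheroni * (1 / 8 * s))"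
    using \<open>0 < t\<close> by (simp add: powr_def mult_exp_exp)
  also have "\<dots> = Y * Gamma (1 / 8 * s + 1)"
    using \<open>0 < Gamma (1 / 8 * s + 1)\<close> by (simp add: Y_def)
  also have "\<dots> \<le> Y * exp G"
    using \<open>Gamma (1 / 8 * s + 1) \<le> exp G\<close> \<open>0 < Gamma (1 / 8 * s + 1)\<close>
    by (intro mult_left_mono) (auto simp: Y_def)
  finally have "exp (s * ln t / 8 - s / 8 - G) \<le> Y"
    by (simp add: exp_diff pos_divide_le_eq ac_simps)
  moreover have "8 * dickman_density (1 / 8 * s) t = s / t * Y"
    using \<open>0 < t\<close> by (simp add: Y_def dickman_density_eq)
  ultimately show ?thesis
    unfolding G_def using assms by (metis divide_pos_pos less_imp_le mult_left_mono)
qed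

lemma ratio_mult_chernoff_factor_le_dickman:
  assumes "0 < s" "0 < t" "t \<le> 1"
  shows "s / t * chernoff_factor (1 / 2) s t \<le> 8 * exp (3 + 10 * exp 20) * dickman_density (1 / 8 * s) t"
proof -
  define D where "D = s * ln t / 8 - s / 8 - (s / 8 + 1) * ln (s / 8 + 1)"
  have "s * ln t \<le> 0"
    using assms by (simp add: mult_nonneg_nonpos)
  have "chernoff_factor (1 / 2) s t \<le> exp (3 + 10 * exp 20 + D)"
  proof (cases "t \<le> s")
    case True
    have "(1 - 1 / 2) * s * ln (s / t) = s * ln s / 2 - s * ln t / 2"
      using assms by (simp add: ln_div field_simps)
    then have "1 + 4 * s - (1 - 1 / 2) * s * ln (s / t) \<le> 3 + 10 * exp 20 + D"
      using linear_minus_half_entropy_le[OF \<open>0 < s\<close>] \<open>s * ln t \<le> 0\<close> unfolding D_def by linarith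
    with True show ?thesis
      by (simp add: chernoff_factor_def)
  next
    case False
    then have "s * ln s \<le> 0" "-1 \<le> s * ln t"
      using assms by (auto simp: mult_nonneg_nonpos neg_one_le_mult_ln)
    then have "0 \<le> 3 + 10 * exp 20 + D"
      using linear_minus_half_entropy_le[OF \<open>0 < s\<close>] \<open>0 < s\<close> unfolding D_def by linarith
    with False show ?thesis
      by (simp add: chernoff_factor_def)
  qed
  then have "s / t * chernoff_factor (1 / 2) s t \<le> s / t * exp (3 + 10 * exp 20 + D)"
    using assms by (intro mult_left_mono) auto
  also have "\<dots> = exp (3 + 10 * exp 20) * (s / t * exp D)"
    by (simp add: exp_add)
  also have "\<dots> \<le> exp (3 + 10 * exp 20) * (8 * dickman_density (1 / 8 * s) t)"
    using dickman_density_lower[OF \<open>0 < s\<close> \<open>0 < t\<close>] unfolding D_def by (intro mult_left_mono) auto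
  finally show ?thesis
    by simp
qed

theorem mainTheorem13:
  fixes r :: "nat \<Rightarrow> real" and a :: real
  assumes a_pos: "0 < a"
    and r_pos: "\<And>n. 1 \<le> n \<Longrightarrow> 0 < r n"
    and r_asymp: "((\<lambda>n. r n * real n) \<longlongrightarrow> a) sequentially"
  shows "\<exists>C c. 0 < C \<and> 0 < c \<and> c < 1 \<and>
     (\<forall>\<epsilon>>0. \<exists>N\<^sub>\<epsilon>::nat. \<forall>N\<ge>N\<^sub>\<epsilon>. \<forall>k::nat. \<forall>m::nat. 1 \<le> k \<longrightarrow> 1 \<le> m \<longrightarrow> m \<le> N \<longrightarrow>
        (let s = real k / ln (real N); t = real m / real N in
          tauP r N k m \<le> C * (1 / real N) * (s / t) * t powr ((1 - \<epsilon>) * s)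
                             * exp (- c * s * logplus (c * s)))) \<and>
     (\<exists>C'>0. \<exists>N\<^sub>0::nat. \<forall>N\<ge>N\<^sub>0. \<forall>k::nat. \<forall>m::nat. 1 \<le> k \<longrightarrow> 1 \<le> m \<longrightarrow> m \<le> N \<longrightarrow>
        (let s = real k / ln (real N); t = real m / real N in
          tauP r N k m \<le> C' * (1 / real N) * dickman_density (c * s) t))"
proof -
  obtain A where "0 < A" and majorant: "\<And>\<delta> H. 0 < \<delta> \<Longrightarrow> \<delta> \<le> 1 \<Longrightarrow>
      (\<And>s t. 0 < s \<Longrightarrow> 0 < t \<Longrightarrow> t \<le> 1 \<Longrightarrow> s / t * chernoff_factor \<delta> s t \<le> H s t) \<Longrightarrow>
      \<exists>N\<^sub>0. \<forall>N\<ge>N\<^sub>0. \<forall>k m. 1 \<le> k \<longrightarrow> 1 \<le> m \<longrightarrow> m \<le> N \<longrightarrow>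
        tauP r N k m \<le> A * (1 / real N) * H (real k / ln (real N)) (real m / real N)"
    using tauP_le_chernoff_majorant[OF a_pos r_pos r_asymp] by blast
  define K where "K = 10 * exp (20::real)"
  define H\<^sub>1 where "H\<^sub>1 \<epsilon> s t =
      s / t * (exp (2 + K) * t powr ((1 - \<epsilon>) * s) * exp (- (1 / 8) * s * logplus (1 / 8 * s)))"
    for \<epsilon> s t :: real
  define H\<^sub>2 where "H\<^sub>2 s t = 8 * exp (3 + K) * dickman_density (1 / 8 * s) t" for s t :: real
  have "\<exists>N\<^sub>\<epsilon>. \<forall>N\<ge>N\<^sub>\<epsilon>. \<forall>k m. 1 \<le> k \<longrightarrow> 1 \<le> m \<longrightarrow> m \<le> N \<longrightarrow>
      tauP r N k m \<le> A * (1 / real N) * H\<^sub>1 \<epsilon> (real k / ln (real N)) (real m / real N)" if "0 < \<epsilon>" for \<epsilon>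
  proof (rule majorant[of "min \<epsilon> (1 / 2)" "H\<^sub>1 \<epsilon>"])
    fix s t :: real assume "0 < s" "0 < t" "t \<le> 1"
    then show "s / t * chernoff_factor (min \<epsilon> (1 / 2)) s t \<le> H\<^sub>1 \<epsilon> s t"
      unfolding H\<^sub>1_def K_def using that by (intro mult_left_mono chernoff_factor_le_power_bound) auto
  qed (use that in auto)
  moreover have "\<exists>N\<^sub>0. \<forall>N\<ge>N\<^sub>0. \<forall>k m. 1 \<le> k \<longrightarrow> 1 \<le> m \<longrightarrow> m \<le> N \<longrightarrow>
      tauP r N k m \<le> A * (1 / real N) * H\<^sub>2 (real k / ln (real N)) (real m / real N)"
  proof (rule majorant[of "1 / 2" H\<^sub>2])
    fix s t :: real assume "0 < s" "0 < t" "t \<le> 1"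
    then show "s / t * chernoff_factor (1 / 2) s t \<le> H\<^sub>2 s t"
      unfolding H\<^sub>2_def K_def by (rule ratio_mult_chernoff_factor_le_dickman)
  qed auto
  ultimately show ?thesis
    using \<open>0 < A\<close>
    by (intro exI[of _ "A * exp (2 + K)"] exI[of _ "1 / 8"] exI[of _ "8 * A * exp (3 + K)"]
        conjI allI impI)
      (simp_all add: Let_def H\<^sub>1_def H\<^sub>2_def ac_simps)
qed

end
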